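(* Let $a\ge 3$ be an integer and let $\mathcal{E}$ be the equation $x+y=az$. Then there is a constant $C_a$ (depending only on $a$) such that for all positive integers $n$: (i) if $a\in\{3,5\}$, then $M_{\mathcal{E}}(n)\le \dfrac{n^2}{4a^2}+C_a n$; (ii) if $a=4$ or $a\ge 6$, then $M_{\mathcal{E}}(n)\le \dfrac{8(2a-1)n^2}{a^4(4+a)}+C_a n$.
   Context: For a positive integer $n$ write $[n]=\{1,\dots,n\}$. A $k$-coloring of $[n]$ is a map $\chi:[n]\to\{0,\dots,k-1\}$. A solution to a 3-variable equation $\mathcal{E}$ in $[n]$ is an ordered triple $(x,y,z)\in[n]^3$ satisfying $\mathcal{E}$; it is monochromatic under $\chi$ if $\chi(x)=\chi(y)=\chi(z)$. $\mu_\chi(\mathcal{E},n,k)$ is the number of monochromatic solutions under $\chi$, $M_{\mathcal{E}}(n,k)=\min_\chi \mu_\chi(\mathcal{E},n,k)$ over all $k$-colorings $\chi$ of $[n]$, and $M_{\mathcal{E}}(n)=M_{\mathcal{E}}(n,2)$. *)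

theory Defs
  imports "HOL-Library.FuncSet" Complex_Main
begin

(* A 3-variable equation is represented as a predicate on ordered triples of positive integers. *)
type_synonym equation3 = "nat \<Rightarrow> nat \<Rightarrow> nat \<Rightarrow> bool"

definition colorings :: "nat \<Rightarrow> nat \<Rightarrow> (nat \<Rightarrow> nat) set" where
  "colorings n k = ({1..n} \<rightarrow>\<^sub>E {0..<k})"

definition mono_count :: "equation3 \<Rightarrow> nat \<Rightarrow> (nat \<Rightarrow> nat) \<Rightarrow> nat" where
  "mono_count E n \<chi> = card {(x, y, z). x \<in> {1..n} \<and> y \<in> {1..n} \<and> z \<in> {1..n} \<and>
       E x y z \<and> \<chi> x = \<chi> y \<and> \<chi> y = \<chi> z}"

definition M_k :: "equation3 \<Rightarrow> nat \<Rightarrow> nat \<Rightarrow> nat" where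
  "M_k E n k = Min (mono_count E n ` colorings n k)"

definition M :: "equation3 \<Rightarrow> nat \<Rightarrow> nat" where
  "M E n = M_k E n 2"

definition eq_xy_az :: "nat \<Rightarrow> equation3" where
  "eq_xy_az a = (\<lambda>x y z. x + y = a * z)"

end

theory Submission
  imports Defs
begin

(* Both bounds come from explicit 2-colourings of [n].
   For odd a, colour a multiple of a by the parity of x/a and any other number by the parity of
   its residue mod a. Two non-multiples with a | x + y have residues summing to a, hence of
   different parity, so a monochromatic solution has x = a X, y = a Y with X, Y congruent mod 2
   to the colour of z = X + Y. It is therefore determined by (ceil (X/2), floor (Y/2)), which
   leaves about (n / 2a)^2 solutions.
   Otherwise one colour class is an interval [p, q). A monochromatic solution is determined by
   (x, y), which lies in a square, two trapezoids or two triangles; counting the points with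
   a | x + y there column by column gives the bounds for n = 32 k (a = 4) and n = a^2 (a + 4) k
   (a >= 6). Since M is monotone in n, bounds along multiples of a fixed D extend to all n. *)

lemma card_dvd_in_interval_le:
  fixes a l u r :: nat
  assumes "a > 0" and "l \<le> u + 1"
  shows "real (card {y \<in> {l..u}. a dvd y + r}) \<le> (real u - real l) / real a + 1"
proof (cases "l \<le> u")
  case False
  then show ?thesis using assms by (simp add: field_simps)
next
  case True
  let ?S = "{y \<in> {l..u}. a dvd y + r}"
  have "inj_on (\<lambda>y. (y - l) div a) ?S"
  proof (rule inj_onI)
    fix y y' assume y: "y \<in> ?S" and y': "y' \<in> ?S" and div_eq: "(y - l) div a = (y' - l) div a"
    have "(y - l) mod a = (y' - l) mod a"
      using y y' by simp (smt (verit) Nat.diff_diff_eq add_diff_cancel_right dvd_diff_nat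
          mod_eq_dvd_iff_nat nle_le)
    then have "y - l = y' - l" using div_eq by (metis div_mult_mod_eq)
    then show "y = y'" using y y' by auto
  qed
  moreover have "(\<lambda>y. (y - l) div a) ` ?S \<subseteq> {0..(u - l) div a}"
    by (auto intro!: div_le_mono diff_le_mono)
  ultimately have "card ?S \<le> (u - l) div a + 1"
    using card_inj_on_le[of _ ?S "{0..(u - l) div a}"] by fastforce
  then have "real (card ?S) \<le> real ((u - l) div a) + 1" by linarith
  also have "real ((u - l) div a) \<le> real (u - l) / real a" by (rule of_nat_div_le_of_nat)
  finally show ?thesis using True by (simp add: of_nat_diff)
qed

lemma card_pairs_dvd_sum_le:
  fixes a :: nat and lo hi :: "nat \<Rightarrow> nat"
  assumes "a > 0" and "finite X" and "\<And>x. x \<in> X \<Longrightarrow> lo x \<le> hi x + 1"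
  shows "real (card {(x, y). x \<in> X \<and> lo x \<le> y \<and> y \<le> hi x \<and> a dvd x + y})
         \<le> (\<Sum>x\<in>X. (real (hi x) - real (lo x)) / real a + 1)"
proof -
  have "{(x, y). x \<in> X \<and> lo x \<le> y \<and> y \<le> hi x \<and> a dvd x + y}
        = Sigma X (\<lambda>x. {y \<in> {lo x..hi x}. a dvd y + x})"
    by (auto simp: add.commute)
  then have "real (card {(x, y). x \<in> X \<and> lo x \<le> y \<and> y \<le> hi x \<and> a dvd x + y})
             = (\<Sum>x\<in>X. real (card {y \<in> {lo x..hi x}. a dvd y + x}))"
    using assms(2) by simp
  also have "\<dots> \<le> (\<Sum>x\<in>X. (real (hi x) - real (lo x)) / real a + 1)"
    using assms by (intro sum_mono card_dvd_in_interval_le) auto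
  finally show ?thesis .
qed

lemma card_square_dvd_sum_le:
  fixes a m :: nat
  assumes "a > 0"
  shows "real (card {(x, y). 1 \<le> x \<and> x \<le> m \<and> 1 \<le> y \<and> y \<le> m \<and> a dvd x + y})
         \<le> real m * ((real m - 1) / real a + 1)"
  using card_pairs_dvd_sum_le[of a "{1..m}" "\<lambda>_. 1" "\<lambda>_. m"] assms by simp

lemma card_trapezoid_dvd_sum_le:
  fixes a m v c :: nat
  assumes "a > 0" and "v + m \<le> c"
  shows "real (card {(x, y). 1 \<le> x \<and> x \<le> m \<and> v \<le> y \<and> x + y \<le> c \<and> a dvd x + y})
         \<le> (real m * (real c - real v) - real m * (real m + 1) / 2) / real a + real m"
proof -
  have "{(x, y). 1 \<le> x \<and> x \<le> m \<and> v \<le> y \<and> x + y \<le> c \<and> a dvd x + y}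
        = {(x, y). x \<in> {1..m} \<and> v \<le> y \<and> y \<le> c - x \<and> a dvd x + y}"
    using assms(2) by auto
  then have "real (card {(x, y). 1 \<le> x \<and> x \<le> m \<and> v \<le> y \<and> x + y \<le> c \<and> a dvd x + y})
        \<le> (\<Sum>x\<in>{1..m}. (real (c - x) - real v) / real a + 1)"
    by (simp only:) (rule card_pairs_dvd_sum_le; use assms in auto)
  also have "\<dots> = (\<Sum>x\<in>{1..m}. ((real c - real v) - real x) / real a + 1)"
    using assms(2) by (intro sum.cong) auto
  also have "\<dots> = (real m * (real c - real v) - (\<Sum>x\<in>{1..m}. real x)) / real a + real m"
    by (simp add: sum.distrib sum_subtractf flip: sum_divide_distrib)
  also have "(\<Sum>x\<in>{1..m}. real x) = real m * (real m + 1) / 2"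
    using double_gauss_sum_from_Suc_0[of m, where 'a = real] by simp
  finally show ?thesis .
qed

lemma card_triangle_dvd_sum_le:
  fixes a u s :: nat
  assumes "a > 0" and "u \<le> s"
  shows "real (card {(x, y). x \<le> u \<and> y \<le> u \<and> s \<le> x + y \<and> a dvd x + y})
         \<le> real (2 * u - s) * (real (2 * u - s) + 1) / (2 * real a) + real (2 * u - s) + 1"
proof -
  let ?x0 = "s - u" and ?m = "2 * u - s"
  have "finite {(x, y). x \<in> {?x0..?x0 + ?m} \<and> s - x \<le> y \<and> y \<le> u \<and> a dvd x + y}"
    by (rule finite_subset[of _ "{0..?x0 + ?m} \<times> {0..u}"]) auto
  moreover have "{(x, y). x \<le> u \<and> y \<le> u \<and> s \<le> x + y \<and> a dvd x + y}
        \<subseteq> {(x, y). x \<in> {?x0..?x0 + ?m} \<and> s - x \<le> y \<and> y \<le> u \<and> a dvd x + y}"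
    by auto
  ultimately have "real (card {(x, y). x \<le> u \<and> y \<le> u \<and> s \<le> x + y \<and> a dvd x + y})
        \<le> real (card {(x, y). x \<in> {?x0..?x0 + ?m} \<and> s - x \<le> y \<and> y \<le> u \<and> a dvd x + y})"
    by (simp add: card_mono)
  also have "\<dots> \<le> (\<Sum>x\<in>{?x0..?x0 + ?m}. (real u - real (s - x)) / real a + 1)"
    by (rule card_pairs_dvd_sum_le) (use assms in auto)
  also have "\<dots> \<le> (\<Sum>x\<in>{?x0..?x0 + ?m}. real (x - ?x0) / real a + 1)"
    using assms by (intro sum_mono divide_right_mono add_right_mono) auto
  also have "\<dots> = (\<Sum>w\<in>{0..?m}. real w / real a + 1)"
    using sum.shift_bounds_cl_nat_ivl[of "\<lambda>x. real (x - ?x0) / real a + 1" 0 ?x0 ?m]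
    by (simp add: add.commute)
  also have "\<dots> = (\<Sum>w\<in>{0..?m}. real w) / real a + real ?m + 1"
    by (simp add: sum.distrib flip: sum_divide_distrib)
  also have "(\<Sum>w\<in>{0..?m}. real w) = real ?m * (real ?m + 1) / 2"
    using double_gauss_sum[of ?m, where 'a = real] by simp
  finally show ?thesis by simp
qed

lemma M_le_mono_count:
  assumes "\<chi> \<in> colorings n 2"
  shows "M E n \<le> mono_count E n \<chi>"
  using assms unfolding M_def M_k_def colorings_def by (simp add: finite_PiE)

lemma M_le_card_monochromatic:
  fixes f :: "nat \<Rightarrow> nat"
  assumes "\<And>x. f x < 2"
  shows "M E n \<le> card {(x, y, z). x \<in> {1..n} \<and> y \<in> {1..n} \<and> z \<in> {1..n} \<and>
                                  E x y z \<and> f x = f y \<and> f y = f z}"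
proof -
  have "restrict f {1..n} \<in> colorings n 2"
    using assms unfolding colorings_def by auto
  then have "M E n \<le> mono_count E n (restrict f {1..n})"
    by (rule M_le_mono_count)
  also have "\<dots> = card {(x, y, z). x \<in> {1..n} \<and> y \<in> {1..n} \<and> z \<in> {1..n} \<and>
                                  E x y z \<and> f x = f y \<and> f y = f z}"
    unfolding mono_count_def by (rule arg_cong[where f = card]) auto
  finally show ?thesis .
qed

lemma M_mono:
  assumes "n \<le> n'"
  shows "M E n \<le> M E n'"
proof -
  have "M E n' \<in> mono_count E n' ` colorings n' 2"
    unfolding M_def M_k_def colorings_def
    by (intro Min_in) (auto simp: finite_PiE PiE_eq_empty_iff)
  then obtain \<chi> where \<chi>: "\<chi> \<in> colorings n' 2" and M_eq: "M E n' = mono_count E n' \<chi>"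
    by auto
  have "restrict \<chi> {1..n} \<in> colorings n 2"
    using \<chi> assms unfolding colorings_def by auto
  then have "M E n \<le> mono_count E n (restrict \<chi> {1..n})"
    by (rule M_le_mono_count)
  also have "\<dots> \<le> mono_count E n' \<chi>"
    unfolding mono_count_def
    by (rule card_mono[OF finite_subset[of _ "{1..n'} \<times> {1..n'} \<times> {1..n'}"]]) (use assms in auto)
  finally show ?thesis using M_eq by simp
qed

lemma M_quadratic_bound_from_multiples:
  fixes E :: equation3 and D :: nat and K L :: real
  assumes "D \<ge> 1" and "K \<ge> 0" and "L \<ge> 0"
    and multiples: "\<And>k. k \<ge> 1 \<Longrightarrow> real (M E (D * k)) \<le> K * real k ^ 2 + L * real k"
  shows "\<exists>C. \<forall>n \<ge> 1. real (M E n) \<le> K / real D ^ 2 * real n ^ 2 + C * real n"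
proof (intro exI allI impI)
  fix n :: nat
  assume n: "n \<ge> 1"
  define k where "k = n div D + 1"
  have "n \<le> D * k"
    unfolding k_def using dividend_less_times_div[of D n] assms(1) by simp
  have k_le: "real k \<le> real n / real D + 1"
    unfolding k_def using of_nat_div_le_of_nat[of n D] by simp
  have n_div: "real n / real D \<le> real n"
    using assms(1) n by (simp add: divide_le_eq)
  have "real (M E n) \<le> real (M E (D * k))"
    using M_mono[OF \<open>n \<le> D * k\<close>] by simp
  also have "\<dots> \<le> K * real k ^ 2 + L * real k"
    by (rule multiples) (simp add: k_def)
  also have "\<dots> \<le> K * (real n / real D + 1) ^ 2 + L * (real n + 1)"
    using k_le n_div assms(2,3) by (intro add_mono mult_left_mono power_mono) auto
  also have "\<dots> = K / real D ^ 2 * real n ^ 2 + 2 * (K * (real n / real D)) + K + L * real n + L"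
    using assms(1) by (simp add: field_simps power2_eq_square)
  also have "\<dots> \<le> K / real D ^ 2 * real n ^ 2 + (3 * K + 2 * L) * real n"
  proof -
    have "K * (real n / real D) \<le> K * real n"
      using n_div assms(2) by (rule mult_left_mono)
    moreover have "K * 1 \<le> K * real n"
      using n assms(2) by (intro mult_left_mono) auto
    moreover have "L * 1 \<le> L * real n"
      using n assms(3) by (intro mult_left_mono) auto
    moreover have "(3 * K + 2 * L) * real n = 3 * (K * real n) + 2 * (L * real n)"
      by (simp add: algebra_simps)
    ultimately show ?thesis by linarith
  qed
  finally show "real (M E n) \<le> K / real D ^ 2 * real n ^ 2 + (3 * K + 2 * L) * real n" .
qed

lemma mod_add_mod_eq_divisor:
  fixes a x y :: nat
  assumes "\<not> a dvd x" "\<not> a dvd y" "a dvd x + y"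
  shows "x mod a + y mod a = a"
proof -
  have "a > 0" using assms(1,3) by (cases a) auto
  have "0 < x mod a" "0 < y mod a"
    using assms(1,2) by (simp_all add: mod_greater_zero_iff_not_dvd)
  moreover have "x mod a < a" "y mod a < a"
    using \<open>a > 0\<close> by simp_all
  moreover have "a dvd x mod a + y mod a"
    using assms(3) by (simp add: dvd_eq_mod_eq_0 mod_add_eq)
  then obtain t where t: "x mod a + y mod a = a * t" ..
  ultimately have "0 < a * t" and "a * t < a * 2" by linarith+
  then have "t = 1" by simp
  then show ?thesis using t by simp
qed

definition parity_coloring :: "nat \<Rightarrow> nat \<Rightarrow> nat" where
  "parity_coloring a x = (if a dvd x then (x div a) mod 2 else (x mod a) mod 2)"

lemma parity_coloring_less_2: "parity_coloring a x < 2"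
  unfolding parity_coloring_def by auto

lemma parity_coloring_monochromatic_solution:
  fixes a x y z :: nat
  assumes "odd a" and sol: "x + y = a * z"
    and col: "parity_coloring a x = parity_coloring a y" "parity_coloring a y = parity_coloring a z"
  shows "x = a * (x div a) \<and> y = a * (y div a) \<and> z = x div a + y div a \<and>
         (x div a) mod 2 = parity_coloring a z \<and> (y div a) mod 2 = parity_coloring a z"
proof -
  have "a > 0" using \<open>odd a\<close> by (rule odd_pos)
  have sum_dvd: "a dvd x + y" using sol by simp
  have "a dvd x"
  proof (rule ccontr)
    assume not_x: "\<not> a dvd x"
    then have not_y: "\<not> a dvd y"
      using sum_dvd by (metis dvd_add_right_iff add.commute)
    have "x mod a + y mod a = a"
      using not_x not_y sum_dvd by (rule mod_add_mod_eq_divisor)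
    then have "odd (x mod a + y mod a)"
      using \<open>odd a\<close> by simp
    then have "(x mod a) mod 2 \<noteq> (y mod a) mod 2"
      by (metis even_add even_iff_mod_2_eq_zero mod2_eq_if)
    then show False
      using col(1) not_x not_y unfolding parity_coloring_def by simp
  qed
  moreover have "a dvd y"
    using \<open>a dvd x\<close> sum_dvd by (simp add: dvd_add_right_iff)
  ultimately have "a * z = a * (x div a + y div a)"
    using sol by (simp add: distrib_left)
  then have "z = x div a + y div a"
    using \<open>a > 0\<close> by simp
  with \<open>a dvd x\<close> \<open>a dvd y\<close> col show ?thesis
    unfolding parity_coloring_def by auto
qed

lemma M_eq_xy_az_odd_le:
  fixes a k :: nat
  assumes "odd a"
  shows "M (eq_xy_az a) (2 * a * k) \<le> (k + 1) ^ 2"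
proof -
  let ?n = "2 * a * k" and ?c = "parity_coloring a"
  let ?S = "{(x, y, z). x \<in> {1..?n} \<and> y \<in> {1..?n} \<and> z \<in> {1..?n} \<and>
                        eq_xy_az a x y z \<and> ?c x = ?c y \<and> ?c y = ?c z}"
  \<comment> \<open>A solution is coded by u = ceil (x/2a) and v = floor (y/2a): then z = 2 (u + v),
    and the colour of z fixes the parities of x/a and y/a.\<close>
  define decode where "decode = (\<lambda>(u, v). (a * (2 * u - ?c (2 * (u + v))),
                                            a * (2 * v + ?c (2 * (u + v))), 2 * (u + v)))"
  have "?S \<subseteq> decode ` ({0..k} \<times> {0..k})"
  proof safe
    fix x y z
    assume "x \<in> {1..?n}" "y \<in> {1..?n}" "z \<in> {1..?n}" and "eq_xy_az a x y z"
      and col: "?c x = ?c y" "?c y = ?c z"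
    have "x + y = a * z" using \<open>eq_xy_az a x y z\<close> by (simp add: eq_xy_az_def)
    note sol = parity_coloring_monochromatic_solution[OF \<open>odd a\<close> this col]
    define X where "X = x div a"
    define Y where "Y = y div a"
    have x: "x = a * X" and y: "y = a * Y" and z: "z = X + Y"
      and par: "X mod 2 = ?c z" "Y mod 2 = ?c z"
      using sol unfolding X_def Y_def by blast+
    have "?n div a = 2 * k" using odd_pos[OF \<open>odd a\<close>] by simp
    then have "X \<le> 2 * k" and "Y \<le> 2 * k"
      using \<open>x \<in> {1..?n}\<close> \<open>y \<in> {1..?n}\<close> unfolding X_def Y_def
      by (metis atLeastAtMost_iff div_le_mono)+
    define u where "u = (X + 1) div 2"
    define v where "v = Y div 2"
    have "u \<le> k" using \<open>X \<le> 2 * k\<close> unfolding u_def by presburger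
    moreover have "v \<le> k" using \<open>Y \<le> 2 * k\<close> unfolding v_def by presburger
    moreover have "X = 2 * u - ?c z" using par(1) unfolding u_def by presburger
    moreover have "Y = 2 * v + ?c z" using par(2) unfolding v_def by presburger
    moreover have "z = 2 * (u + v)" using z par unfolding u_def v_def by presburger
    ultimately show "(x, y, z) \<in> decode ` ({0..k} \<times> {0..k})"
      using x y by (intro image_eqI[of _ _ "(u, v)"]) (simp_all add: decode_def)
  qed
  then have "card ?S \<le> card ({0..k} \<times> {0..k})"
    by (intro surj_card_le) simp_all
  moreover have "M (eq_xy_az a) ?n \<le> card ?S"
    by (rule M_le_card_monochromatic) (rule parity_coloring_less_2)
  ultimately show ?thesis
    by (simp add: power2_eq_square)
qed

definition interval_coloring :: "nat \<Rightarrow> nat \<Rightarrow> nat \<Rightarrow> nat" where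
  "interval_coloring p q x = of_bool (p \<le> x \<and> x < q)"

lemma interval_coloring_monochromatic_solution:
  fixes a p q x y z :: nat
  assumes "a > 0" and "a * p \<le> 2 * q" and sol: "x + y = a * z"
    and col: "interval_coloring p q x = interval_coloring p q y"
             "interval_coloring p q y = interval_coloring p q z"
  shows "x < p \<and> y < p \<or> x < p \<and> q \<le> y \<and> x + y < a * p \<or> q \<le> x \<and> y < p \<and> x + y < a * p \<or>
         x < q \<and> y < q \<and> a * p \<le> x + y \<or> a * q \<le> x + y"
proof -
  from col have same_x: "p \<le> x \<and> x < q \<longleftrightarrow> p \<le> z \<and> z < q"
    and same_y: "p \<le> y \<and> y < q \<longleftrightarrow> p \<le> z \<and> z < q"
    by (simp_all add: interval_coloring_def of_bool_eq_iff)
  consider "q \<le> z" | "p \<le> z" "z < q" | "z < p" by linarith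
  then show ?thesis
  proof cases
    case 1
    then show ?thesis using sol by simp
  next
    case 2
    then show ?thesis using same_x same_y sol by simp
  next
    case 3
    then have "x < p \<or> q \<le> x" and "y < p \<or> q \<le> y" and "x + y < a * p"
      using same_x same_y sol \<open>a > 0\<close> by auto
    then show ?thesis using assms(2) by linarith
  qed
qed

lemma M_eq_xy_az_interval_coloring_le_card:
  fixes a n p q :: nat
  assumes "a > 0" and "a * p \<le> 2 * q"
  defines "A1 \<equiv> {(x, y). 1 \<le> x \<and> x \<le> p \<and> 1 \<le> y \<and> y \<le> p \<and> a dvd x + y}"
    and "A2 \<equiv> {(x, y). 1 \<le> x \<and> x \<le> p \<and> q \<le> y \<and> x + y \<le> a * p \<and> a dvd x + y}"
    and "A3 \<equiv> {(x, y). x \<le> q - 1 \<and> y \<le> q - 1 \<and> a * p \<le> x + y \<and> a dvd x + y}"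
    and "A4 \<equiv> {(x, y). x \<le> n \<and> y \<le> n \<and> a * q \<le> x + y \<and> a dvd x + y}"
  shows "M (eq_xy_az a) n \<le> card A1 + 2 * card A2 + card A3 + card A4"
proof -
  let ?c = "interval_coloring p q"
  let ?S = "{(x, y, z). x \<in> {1..n} \<and> y \<in> {1..n} \<and> z \<in> {1..n} \<and>
                        eq_xy_az a x y z \<and> ?c x = ?c y \<and> ?c y = ?c z}"
  let ?A = "A1 \<union> A2 \<union> prod.swap ` A2 \<union> A3 \<union> A4"
  have "?S \<subseteq> (\<lambda>(x, y). (x, y, (x + y) div a)) ` ?A"
  proof safe
    fix x y z
    assume "x \<in> {1..n}" "y \<in> {1..n}" "z \<in> {1..n}" and "eq_xy_az a x y z"
      and col: "?c x = ?c y" "?c y = ?c z"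
    then have sol: "x + y = a * z" by (simp add: eq_xy_az_def)
    then have "(x, y) \<in> ?A"
      using interval_coloring_monochromatic_solution[OF assms(1,2) sol col]
        \<open>x \<in> {1..n}\<close> \<open>y \<in> {1..n}\<close>
      unfolding A1_def A2_def A3_def A4_def by (auto simp: image_iff add.commute)
    moreover have "(x, y, z) = (\<lambda>(x, y). (x, y, (x + y) div a)) (x, y)"
      using sol \<open>a > 0\<close> by simp
    ultimately show "(x, y, z) \<in> (\<lambda>(x, y). (x, y, (x + y) div a)) ` ?A"
      by (rule rev_image_eqI)
  qed
  moreover have "finite A1"
    unfolding A1_def by (rule finite_subset[of _ "{0..p} \<times> {0..p}"]) auto
  moreover have "finite A2"
    unfolding A2_def by (rule finite_subset[of _ "{0..a * p} \<times> {0..a * p}"]) auto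
  moreover have "finite A3"
    unfolding A3_def by (rule finite_subset[of _ "{0..q} \<times> {0..q}"]) auto
  moreover have "finite A4"
    unfolding A4_def by (rule finite_subset[of _ "{0..n} \<times> {0..n}"]) auto
  ultimately have "card ?S \<le> card ?A"
    by (intro surj_card_le) auto
  also have "\<dots> \<le> card A1 + card A2 + card (prod.swap ` A2) + card A3 + card A4"
    using card_Un_le[of "A1 \<union> A2 \<union> prod.swap ` A2 \<union> A3" A4] card_Un_le[of "A1 \<union> A2 \<union> prod.swap ` A2" A3]
      card_Un_le[of "A1 \<union> A2" "prod.swap ` A2"] card_Un_le[of A1 A2] by linarith
  also have "card (prod.swap ` A2) \<le> card A2"
    by (rule card_image_le) fact
  moreover have "M (eq_xy_az a) n \<le> card ?S"
    by (rule M_le_card_monochromatic) (simp add: interval_coloring_def)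
  ultimately show ?thesis by linarith
qed

lemma M_eq_xy_az_interval_coloring_le:
  fixes a n p q :: nat
  assumes "a > 0" and "q + p \<le> a * p" and "a * p \<le> 2 * q" and "n \<le> a * q"
  shows "real (M (eq_xy_az a) n)
         \<le> real p * ((real p - 1) / real a + 1)
           + 2 * ((real p * (real (a * p) - real q) - real p * (real p + 1) / 2) / real a + real p)
           + (real (2 * (q - 1) - a * p) * (real (2 * (q - 1) - a * p) + 1) / (2 * real a)
              + real (2 * (q - 1) - a * p) + 1)
           + (real (2 * n - a * q) * (real (2 * n - a * q) + 1) / (2 * real a)
              + real (2 * n - a * q) + 1)" (is "_ \<le> ?bound")
proof -
  have "q - 1 \<le> a * p" using assms(2) by linarith
  have "real (M (eq_xy_az a) n)
        \<le> real (card {(x, y). 1 \<le> x \<and> x \<le> p \<and> 1 \<le> y \<and> y \<le> p \<and> a dvd x + y})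
          + 2 * real (card {(x, y). 1 \<le> x \<and> x \<le> p \<and> q \<le> y \<and> x + y \<le> a * p \<and> a dvd x + y})
          + real (card {(x, y). x \<le> q - 1 \<and> y \<le> q - 1 \<and> a * p \<le> x + y \<and> a dvd x + y})
          + real (card {(x, y). x \<le> n \<and> y \<le> n \<and> a * q \<le> x + y \<and> a dvd x + y})"
    using M_eq_xy_az_interval_coloring_le_card[OF assms(1,3), of n] by linarith
  also have "\<dots> \<le> ?bound"
    using card_square_dvd_sum_le[OF assms(1), of p]
      card_trapezoid_dvd_sum_le[OF assms(1,2)]
      card_triangle_dvd_sum_le[OF assms(1) \<open>q - 1 \<le> a * p\<close>]
      card_triangle_dvd_sum_le[OF assms(1,4)]
    by (intro add_mono mult_left_mono; (assumption | simp))
  finally show ?thesis .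
qed

lemma M_eq_xy_az_4_le:
  fixes k :: nat
  assumes "k \<ge> 1"
  shows "real (M (eq_xy_az 4) (32 * k)) \<le> 28 * real k ^ 2 + 24 * real k"
proof -
  have m: "2 * (15 * k - 1) - 4 * (5 * k) = 10 * k - 2" and m': "2 * (32 * k) - 4 * (15 * k) = 4 * k"
    by simp_all
  have r: "real (10 * k - 2) = 10 * real k - 2"
    using assms by (simp add: of_nat_diff)
  have "real (M (eq_xy_az 4) (32 * k))
        \<le> real (5 * k) * ((real (5 * k) - 1) / 4 + 1)
           + 2 * ((real (5 * k) * (real (4 * (5 * k)) - real (15 * k))
                   - real (5 * k) * (real (5 * k) + 1) / 2) / 4 + real (5 * k))
           + (real (10 * k - 2) * (real (10 * k - 2) + 1) / (2 * 4) + real (10 * k - 2) + 1)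
           + (real (4 * k) * (real (4 * k) + 1) / (2 * 4) + real (4 * k) + 1)"
    using M_eq_xy_az_interval_coloring_le[of 4 "15 * k" "5 * k" "32 * k"] unfolding m m' by simp
  also have "\<dots> = 27 * real k ^ 2 + 93 * real k / 4 + 1 / 4"
    unfolding r by (simp add: field_simps power2_eq_square)
  also have "\<dots> \<le> 28 * real k ^ 2 + 24 * real k"
    using assms zero_le_power2[of "real k"] by linarith
  finally show ?thesis .
qed

lemma M_eq_xy_az_ge_6_le:
  fixes a k :: nat
  assumes "a \<ge> 6" and "k \<ge> 1"
  shows "real (M (eq_xy_az a) (a\<^sup>2 * (a + 4) * k))
         \<le> 8 * (2 * real a - 1) * (real a + 4) * real k ^ 2 + (24 * real a + 20) * real k"
proof -
  \<comment> \<open>q is just above 2n/a, so no monochromatic solution has z \<ge> q.\<close>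
  define n where "n = a\<^sup>2 * (a + 4) * k"
  define p where "p = 4 * (a + 1) * k"
  define q where "q = 2 * a * (a + 4) * k + 1"
  obtain b where b: "a = b + 6" using assms(1) by (metis add.commute le_Suc_ex)
  have "q + p + (2 * b * b * k + 16 * b * k + 20 * k) = a * p + 1"
    unfolding p_def q_def b by (simp add: algebra_simps)
  then have "q + p \<le> a * p" using assms(2) by linarith
  have "a * p \<le> 2 * q" and "2 * n \<le> a * q"
    unfolding n_def p_def q_def b by (simp_all add: algebra_simps power2_eq_square)
  have "a * p + 12 * a * k = 2 * (q - 1)"
    unfolding p_def q_def b by (simp add: algebra_simps)
  then have "2 * (q - 1) - a * p = 12 * a * k" by simp
  then have "real (M (eq_xy_az a) n)
        \<le> real p * ((real p - 1) / real a + 1)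
           + 2 * ((real p * (real a * real p - real q) - real p * (real p + 1) / 2) / real a + real p)
           + (real (12 * a * k) * (real (12 * a * k) + 1) / (2 * real a) + real (12 * a * k) + 1)
           + 1"
    using M_eq_xy_az_interval_coloring_le[of a q p n] assms(1)
      \<open>q + p \<le> a * p\<close> \<open>a * p \<le> 2 * q\<close> \<open>2 * n \<le> a * q\<close> by simp
  also have "\<dots> = 8 * (2 * real a - 1) * (real a + 4) * real k ^ 2 + (24 * real a + 18) * real k
                  + 2 - 16 * (real a + 1) * real k / real a"
    using assms(1) unfolding p_def q_def by (simp add: field_simps power2_eq_square)
  also have "\<dots> \<le> 8 * (2 * real a - 1) * (real a + 4) * real k ^ 2 + (24 * real a + 20) * real k"
  proof -
    have "0 \<le> 16 * (real a + 1) * real k / real a" by simp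
    moreover have "(24 * real a + 20) * real k = (24 * real a + 18) * real k + 2 * real k"
      by (simp add: algebra_simps)
    ultimately show ?thesis using assms(2) by linarith
  qed
  finally show ?thesis unfolding n_def .
qed

lemma M_eq_xy_az_odd_quadratic_bound:
  fixes a :: nat
  assumes "odd a"
  shows "\<exists>C. \<forall>n \<ge> 1. real (M (eq_xy_az a) n) \<le> real n ^ 2 / (4 * real a ^ 2) + C * real n"
proof -
  have "\<exists>C. \<forall>n \<ge> 1. real (M (eq_xy_az a) n) \<le> 1 / real (2 * a) ^ 2 * real n ^ 2 + C * real n"
  proof (rule M_quadratic_bound_from_multiples)
    fix k :: nat
    assume "k \<ge> 1"
    have "real (M (eq_xy_az a) (2 * a * k)) \<le> real ((k + 1) ^ 2)"
      using M_eq_xy_az_odd_le[OF assms] by (simp only: of_nat_le_iff)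
    also have "\<dots> \<le> 1 * real k ^ 2 + 3 * real k"
      using \<open>k \<ge> 1\<close> by (simp add: power2_eq_square algebra_simps)
    finally show "real (M (eq_xy_az a) (2 * a * k)) \<le> 1 * real k ^ 2 + 3 * real k" .
  qed (use odd_pos[OF assms] in auto)
  moreover have "1 / real (2 * a) ^ 2 * real n ^ 2 = real n ^ 2 / (4 * real a ^ 2)" for n :: nat
    by (simp add: power_mult_distrib)
  ultimately show ?thesis by simp
qed

lemma M_eq_xy_az_quadratic_bound:
  fixes a :: nat
  assumes "a = 4 \<or> a \<ge> 6"
  shows "\<exists>C. \<forall>n \<ge> 1. real (M (eq_xy_az a) n)
                      \<le> 8 * (2 * real a - 1) * real n ^ 2 / (real a ^ 4 * (4 + real a)) + C * real n"
  using assms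
proof
  assume "a = 4"
  have "\<exists>C. \<forall>n \<ge> 1. real (M (eq_xy_az 4) n) \<le> 28 / real (32::nat) ^ 2 * real n ^ 2 + C * real n"
    by (rule M_quadratic_bound_from_multiples[where L = 24]) (use M_eq_xy_az_4_le in auto)
  then show ?thesis using \<open>a = 4\<close> by simp
next
  assume "a \<ge> 6"
  have "\<exists>C. \<forall>n \<ge> 1. real (M (eq_xy_az a) n)
          \<le> 8 * (2 * real a - 1) * (real a + 4) / real (a\<^sup>2 * (a + 4)) ^ 2 * real n ^ 2 + C * real n"
    by (rule M_quadratic_bound_from_multiples[where L = "24 * real a + 20"])
      (use \<open>a \<ge> 6\<close> M_eq_xy_az_ge_6_le in auto)
  moreover have "8 * (2 * real a - 1) * (real a + 4) / real (a\<^sup>2 * (a + 4)) ^ 2 * real n ^ 2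
                 = 8 * (2 * real a - 1) * real n ^ 2 / (real a ^ 4 * (4 + real a))" for n :: nat
  proof -
    have "real (a\<^sup>2 * (a + 4)) ^ 2 = (real a ^ 4 * (4 + real a)) * (real a + 4)"
      by (simp add: power2_eq_square power4_eq_xxxx algebra_simps)
    then show ?thesis
      using \<open>a \<ge> 6\<close> by (simp add: mult.commute mult.left_commute)
  qed
  ultimately show ?thesis by simp
qed

theorem theorem3:
  fixes a :: nat
  assumes "a \<ge> 3"
  shows "\<exists>C::real. \<forall>n::nat. n \<ge> 1 \<longrightarrow>
           ((a = 3 \<or> a = 5) \<longrightarrow>
              real (M (eq_xy_az a) n) \<le> real n ^ 2 / (4 * real a ^ 2) + C * real n) \<and>
           ((a = 4 \<or> a \<ge> 6) \<longrightarrow>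
              real (M (eq_xy_az a) n) \<le> 8 * (2 * real a - 1) * real n ^ 2 / (real a ^ 4 * (4 + real a)) + C * real n)"
proof (cases "a = 3 \<or> a = 5")
  case True
  then obtain C where "\<forall>n \<ge> 1. real (M (eq_xy_az a) n) \<le> real n ^ 2 / (4 * real a ^ 2) + C * real n"
    using M_eq_xy_az_odd_quadratic_bound[of a] by auto
  then show ?thesis using True by (intro exI[of _ C]) auto
next
  case False
  with assms have "a = 4 \<or> a \<ge> 6" by auto
  then obtain C where "\<forall>n \<ge> 1. real (M (eq_xy_az a) n)
                        \<le> 8 * (2 * real a - 1) * real n ^ 2 / (real a ^ 4 * (4 + real a)) + C * real n"
    using M_eq_xy_az_quadratic_bound by blast
  then show ?thesis using False by (intro exI[of _ C]) auto
qed

end
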